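(* For all finite multisets $\Gamma,\Delta$ of ${\sf Frm_2}$-formulas: $\Gamma\Rightarrow\Delta$ is derivable in ${\sf GWF_{N_2}}$ if and only if $\Gamma^\square\Rightarrow\Delta^\square$ is derivable in ${\sf G3M_{Nec}}$.
   Context: Language: countably many atoms $p,q,\dots$, the constant $\bot$, and binary connectives $\wedge,\vee,\rightarrow$ ($\rightarrow$ is strict implication). ${\sf Frm}$ is the set of formulas built from atoms and $\bot$ with $\wedge,\vee,\rightarrow$; $A,B,C,D$ range over ${\sf Frm}$. Let $\supset$ be a new binary symbol (material implication) and ${\sf Frm_1}={\sf Frm}\cup\{A\supset B : A,B\in{\sf Frm}\}$ (no nesting of $\supset$). ${\sf Frm_2}$ is the smallest set containing ${\sf Frm_1}$ and closed under $\wedge$ and $\vee$; $X,Y$ range over ${\sf Frm_2}$. A sequent is $\Gamma\Rightarrow\Delta$ with $\Gamma,\Delta$ finite multisets of ${\sf Frm_2}$-formulas. The calculus ${\sf GWF_{N_2}}$ has initial sequents $(id)$ $p,\Gamma\Rightarrow\Delta,p$ ($p$ an atom) and $(L_\bot)$ $\bot,\Gamma\Rightarrow\Delta$, and rules (premises / conclusion): $(L_\wedge)$ $X,Y,\Gamma\Rightarrow\Delta$ / $X\wedge Y,\Gamma\Rightarrow\Delta$; $(R_\wedge)$ $\Gamma\Rightarrow\Delta,X$ and $\Gamma\Rightarrow\Delta,Y$ / $\Gamma\Rightarrow\Delta,X\wedge Y$; $(L_\vee)$ $X,\Gamma\Rightarrow\Delta$ and $Y,\Gamma\Rightarrow\Delta$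 / $X\vee Y,\Gamma\Rightarrow\Delta$; $(R_\vee)$ $\Gamma\Rightarrow\Delta,X,Y$ / $\Gamma\Rightarrow\Delta,X\vee Y$; $(L_\supset)$ $\Gamma\Rightarrow\Delta,A$ and $B,\Gamma\Rightarrow\Delta$ / $A\supset B,\Gamma\Rightarrow\Delta$; $(R_\supset)$ $A,\Gamma\Rightarrow\Delta,B$ / $\Gamma\Rightarrow\Delta,A\supset B$; $(LR_\rightarrow)$ $C\supset D,A\Rightarrow B$ / $\Gamma,C\rightarrow D\Rightarrow\Delta,A\rightarrow B$; $(R_\rightarrow)$ $A\Rightarrow B$ / $\Gamma\Rightarrow\Delta,A\rightarrow B$. Here $A,B,C,D\in{\sf Frm}$, $X,Y\in{\sf Frm_2}$, and $\Gamma,\Delta$ are arbitrary finite multisets of ${\sf Frm_2}$-formulas. The modal language $\mathcal{L}_\square$ has atoms, $\bot$, binary $\wedge,\vee,\supset$ and unary $\square$. The sequent calculus ${\sf G3M_{Nec}}$ (sequents $\Gamma\Rightarrow\Delta$ of finite multisets of $\mathcal{L}_\square$-formulas; here $A,B$ are arbitrary $\mathcal{L}_\square$-formulas) has initial sequents $p,\Gamma\Rightarrow\Delta,p$ ($p$ an atom) and $\bot,\Gamma\Rightarrow\Delta$; rules: $A,B,\Gamma\Rightarrow\Delta$ / $A\wedge B,\Gamma\Rightarrow\Delta$; $\Gamma\Rightarrow\Delta,A$ and $\Gamma\Rightarrow\Delta,B$ / $\Gamma\Rightarrow\Delta,A\wedge B$; $A,\Gamma\Rightarrow\Delta$ and $B,\Gamma\Rightarrow\Delta$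 / $A\vee B,\Gamma\Rightarrow\Delta$; $\Gamma\Rightarrow\Delta,A,B$ / $\Gamma\Rightarrow\Delta,A\vee B$; $\Gamma\Rightarrow\Delta,A$ and $B,\Gamma\Rightarrow\Delta$ / $A\supset B,\Gamma\Rightarrow\Delta$; $A,\Gamma\Rightarrow\Delta,B$ / $\Gamma\Rightarrow\Delta,A\supset B$; $(LR_{M_\square})$ $A\Rightarrow B$ / $\square A,\Gamma\Rightarrow\Delta,\square B$; $(R_{N_\square})$ $\Rightarrow B$ / $\Gamma\Rightarrow\Delta,\square B$. The $\square$-translation from formulas built with $\wedge,\vee,\rightarrow,\supset,\bot$ into $\mathcal{L}_\square$ is: $p^\square=p$, $\bot^\square=\bot$, $(A\circ B)^\square=A^\square\circ B^\square$ for $\circ\in\{\wedge,\vee,\supset\}$, $(A\rightarrow B)^\square=\square(A^\square\supset B^\square)$; for a multiset $\Gamma$, $\Gamma^\square=\{A^\square : A\in\Gamma\}$ (as a multiset). *)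

theory Defs
  imports Main "HOL-Library.Multiset"
begin

text \<open>One formula type containing all connectives; Frm, Frm1, Frm2 are carved out by predicates.
 SImp = strict implication (arrow), MImp = material implication (supset).\<close>
datatype fml = At nat | Bot | Conj fml fml | Disj fml fml | SImp fml fml | MImp fml fml

fun isFrm :: "fml \<Rightarrow> bool" where
  "isFrm (At p) = True"
| "isFrm Bot = True"
| "isFrm (Conj A B) = (isFrm A \<and> isFrm B)"
| "isFrm (Disj A B) = (isFrm A \<and> isFrm B)"
| "isFrm (SImp A B) = (isFrm A \<and> isFrm B)"
| "isFrm (MImp A B) = False"

definition isFrm1 :: "fml \<Rightarrow> bool" where
  "isFrm1 X \<longleftrightarrow> isFrm X \<or> (\<exists>A B. isFrm A \<and> isFrm B \<and> X = MImp A B)"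

inductive isFrm2 :: "fml \<Rightarrow> bool" where
  base: "isFrm1 X \<Longrightarrow> isFrm2 X"
| conj: "isFrm2 X \<Longrightarrow> isFrm2 Y \<Longrightarrow> isFrm2 (Conj X Y)"
| disj: "isFrm2 X \<Longrightarrow> isFrm2 Y \<Longrightarrow> isFrm2 (Disj X Y)"

definition wfms :: "fml multiset \<Rightarrow> bool" where
  "wfms \<Gamma> \<longleftrightarrow> (\<forall>X\<in>#\<Gamma>. isFrm2 X)"

inductive gwf :: "fml multiset \<Rightarrow> fml multiset \<Rightarrow> bool" where
  idA: "wfms \<Gamma> \<Longrightarrow> wfms \<Delta> \<Longrightarrow> gwf (add_mset (At p) \<Gamma>) (add_mset (At p) \<Delta>)"
| LBot: "wfms \<Gamma> \<Longrightarrow> wfms \<Delta> \<Longrightarrow> gwf (add_mset Bot \<Gamma>) \<Delta>"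
| LConj: "isFrm2 X \<Longrightarrow> isFrm2 Y \<Longrightarrow> gwf (add_mset X (add_mset Y \<Gamma>)) \<Delta>
          \<Longrightarrow> gwf (add_mset (Conj X Y) \<Gamma>) \<Delta>"
| RConj: "isFrm2 X \<Longrightarrow> isFrm2 Y \<Longrightarrow> gwf \<Gamma> (add_mset X \<Delta>) \<Longrightarrow> gwf \<Gamma> (add_mset Y \<Delta>)
          \<Longrightarrow> gwf \<Gamma> (add_mset (Conj X Y) \<Delta>)"
| LDisj: "isFrm2 X \<Longrightarrow> isFrm2 Y \<Longrightarrow> gwf (add_mset X \<Gamma>) \<Delta> \<Longrightarrow> gwf (add_mset Y \<Gamma>) \<Delta>
          \<Longrightarrow> gwf (add_mset (Disj X Y) \<Gamma>) \<Delta>"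
| RDisj: "isFrm2 X \<Longrightarrow> isFrm2 Y \<Longrightarrow> gwf \<Gamma> (add_mset X (add_mset Y \<Delta>))
          \<Longrightarrow> gwf \<Gamma> (add_mset (Disj X Y) \<Delta>)"
| LMImp: "isFrm A \<Longrightarrow> isFrm B \<Longrightarrow> gwf \<Gamma> (add_mset A \<Delta>) \<Longrightarrow> gwf (add_mset B \<Gamma>) \<Delta>
          \<Longrightarrow> gwf (add_mset (MImp A B) \<Gamma>) \<Delta>"
| RMImp: "isFrm A \<Longrightarrow> isFrm B \<Longrightarrow> gwf (add_mset A \<Gamma>) (add_mset B \<Delta>)
          \<Longrightarrow> gwf \<Gamma> (add_mset (MImp A B) \<Delta>)"
| LRSImp: "isFrm A \<Longrightarrow> isFrm B \<Longrightarrow> isFrm C \<Longrightarrow> isFrm D \<Longrightarrow> wfms \<Gamma> \<Longrightarrow> wfms \<Delta>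
          \<Longrightarrow> gwf {#MImp C D, A#} {#B#}
          \<Longrightarrow> gwf (add_mset (SImp C D) \<Gamma>) (add_mset (SImp A B) \<Delta>)"
| RSImp: "isFrm A \<Longrightarrow> isFrm B \<Longrightarrow> wfms \<Gamma> \<Longrightarrow> wfms \<Delta>
          \<Longrightarrow> gwf {#A#} {#B#}
          \<Longrightarrow> gwf \<Gamma> (add_mset (SImp A B) \<Delta>)"

datatype mfml = MAt nat | MBot | MConj mfml mfml | MDisj mfml mfml | MImpl mfml mfml | Box mfml

inductive g3m :: "mfml multiset \<Rightarrow> mfml multiset \<Rightarrow> bool" where
  idA: "g3m (add_mset (MAt p) \<Gamma>) (add_mset (MAt p) \<Delta>)"
| LBot: "g3m (add_mset MBot \<Gamma>) \<Delta>"
| LConj: "g3m (add_mset A (add_mset B \<Gamma>)) \<Delta> \<Longrightarrow> g3m (add_mset (MConj A B) \<Gamma>) \<Delta>"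
| RConj: "g3m \<Gamma> (add_mset A \<Delta>) \<Longrightarrow> g3m \<Gamma> (add_mset B \<Delta>) \<Longrightarrow> g3m \<Gamma> (add_mset (MConj A B) \<Delta>)"
| LDisj: "g3m (add_mset A \<Gamma>) \<Delta> \<Longrightarrow> g3m (add_mset B \<Gamma>) \<Delta> \<Longrightarrow> g3m (add_mset (MDisj A B) \<Gamma>) \<Delta>"
| RDisj: "g3m \<Gamma> (add_mset A (add_mset B \<Delta>)) \<Longrightarrow> g3m \<Gamma> (add_mset (MDisj A B) \<Delta>)"
| LImp: "g3m \<Gamma> (add_mset A \<Delta>) \<Longrightarrow> g3m (add_mset B \<Gamma>) \<Delta> \<Longrightarrow> g3m (add_mset (MImpl A B) \<Gamma>) \<Delta>"
| RImp: "g3m (add_mset A \<Gamma>) (add_mset B \<Delta>) \<Longrightarrow> g3m \<Gamma> (add_mset (MImpl A B) \<Delta>)"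
| LRM: "g3m {#A#} {#B#} \<Longrightarrow> g3m (add_mset (Box A) \<Gamma>) (add_mset (Box B) \<Delta>)"
| RN: "g3m {#} {#B#} \<Longrightarrow> g3m \<Gamma> (add_mset (Box B) \<Delta>)"

fun boxtr :: "fml \<Rightarrow> mfml" where
  "boxtr (At p) = MAt p"
| "boxtr Bot = MBot"
| "boxtr (Conj A B) = MConj (boxtr A) (boxtr B)"
| "boxtr (Disj A B) = MDisj (boxtr A) (boxtr B)"
| "boxtr (MImp A B) = MImpl (boxtr A) (boxtr B)"
| "boxtr (SImp A B) = Box (MImpl (boxtr A) (boxtr B))"

end

theory Submission
  imports Defs
begin

text \<open>The translation commutes with every propositional rule, and each of the two strict-implication
  rules of GWF becomes the corresponding box rule of G3M after one application of the right rule for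
  material implication. Conversely, the translation is injective and preserves the main connective
  except that strict implications become boxes, so in a G3M derivation of a translated sequent every
  propositional premise is again the translation of a well-formed sequent. The box rules leave the
  translated premise C \<supset> D \<Rightarrow> A \<supset> B, which yields the premise C \<supset> D, A \<Rightarrow> B of the
  strict-implication rule because the right rule for material implication is invertible in GWF.\<close>

lemma isFrm_imp_isFrm2: "isFrm A \<Longrightarrow> isFrm2 A"
  by (rule isFrm2.base) (simp add: isFrm1_def)

lemma isFrm2_simps [simp]:
  "isFrm2 (At p)"
  "isFrm2 Bot"
  "isFrm2 (Conj X Y) \<longleftrightarrow> isFrm2 X \<and> isFrm2 Y"
  "isFrm2 (Disj X Y) \<longleftrightarrow> isFrm2 X \<and> isFrm2 Y"
  "isFrm2 (MImp A B) \<longleftrightarrow> isFrm A \<and> isFrm B"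
  "isFrm2 (SImp A B) \<longleftrightarrow> isFrm A \<and> isFrm B"
  by (auto intro: isFrm2.intros isFrm_imp_isFrm2 elim: isFrm2.cases simp: isFrm1_def)
    (auto intro: isFrm_imp_isFrm2 elim!: isFrm2.cases simp: isFrm1_def)

lemma wfms_simps [simp]:
  "wfms {#}"
  "wfms (add_mset X \<Gamma>) \<longleftrightarrow> isFrm2 X \<and> wfms \<Gamma>"
  by (auto simp: wfms_def)

lemma gwf_wfms: "gwf \<Gamma> \<Delta> \<Longrightarrow> wfms \<Gamma> \<and> wfms \<Delta>"
  by (induction rule: gwf.induct) auto

lemma gwf_RMImp_inv:
  assumes "gwf \<Gamma> (add_mset (MImp A B) \<Delta>)"
  shows "gwf (add_mset A \<Gamma>) (add_mset B \<Delta>)"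
proof -
  have AB: "isFrm2 A" "isFrm2 B"
    using gwf_wfms[OF assms] by (auto intro: isFrm_imp_isFrm2)
  have "gwf (add_mset A \<Gamma>) (add_mset B \<Delta>0)"
    if "gwf \<Gamma> \<Delta>'" "\<Delta>' = add_mset (MImp A B) \<Delta>0" for \<Gamma> \<Delta>' \<Delta>0
    using that
  proof (induction arbitrary: \<Delta>0 rule: gwf.induct)
    case (idA \<Gamma> \<Delta> p)
    then show ?case
      by (auto simp: add_eq_conv_ex add_mset_commute[of A] add_mset_commute[of B] AB
          intro!: gwf.idA)
  next
    case (LBot \<Gamma> \<Delta>)
    then show ?case
      by (auto simp: add_mset_commute[of A] AB intro!: gwf.LBot)
  next
    case (LConj X Y \<Gamma> \<Delta>)
    then show ?case
      by (auto simp: add_mset_commute[of A] intro!: gwf.LConj)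
  next
    case (LDisj X Y \<Gamma> \<Delta>)
    then show ?case
      by (auto simp: add_mset_commute[of A] intro!: gwf.LDisj)
  next
    case (LMImp A' B' \<Gamma> \<Delta>)
    then show ?case
      by (auto simp: add_mset_commute[of A] add_mset_commute[of B] intro!: gwf.LMImp)
  next
    case (RConj X Y \<Gamma> \<Delta>)
    then obtain K where K: "\<Delta> = add_mset (MImp A B) K" "\<Delta>0 = add_mset (Conj X Y) K"
      by (auto simp: add_eq_conv_ex)
    have "gwf (add_mset A \<Gamma>) (add_mset (Conj X Y) (add_mset B K))"
      using RConj K by (intro gwf.RConj) (auto simp: add_mset_commute)
    then show ?case
      using K by (simp add: add_mset_commute)
  next
    case (RDisj X Y \<Gamma> \<Delta>)
    then obtain K where K: "\<Delta> = add_mset (MImp A B) K" "\<Delta>0 = add_mset (Disj X Y) K"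
      by (auto simp: add_eq_conv_ex)
    have "gwf (add_mset A \<Gamma>) (add_mset (Disj X Y) (add_mset B K))"
      using RDisj K by (intro gwf.RDisj) (auto simp: add_mset_commute)
    then show ?case
      using K by (simp add: add_mset_commute)
  next
    case (RMImp A' B' \<Gamma> \<Delta>)
    show ?case
    proof (cases "MImp A' B' = MImp A B \<and> \<Delta> = \<Delta>0")
      case True
      with RMImp show ?thesis by simp
    next
      case False
      with RMImp.prems obtain K
        where K: "\<Delta> = add_mset (MImp A B) K" "\<Delta>0 = add_mset (MImp A' B') K"
        by (auto simp: add_eq_conv_ex)
      have "gwf (add_mset A \<Gamma>) (add_mset (MImp A' B') (add_mset B K))"
        using RMImp K by (intro gwf.RMImp) (auto simp: add_mset_commute)
      then show ?thesis
        using K by (simp add: add_mset_commute)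
    qed
  next
    case (LRSImp A' B' C D \<Gamma> \<Delta>)
    then show ?case
      by (auto simp: add_eq_conv_ex add_mset_commute[of A] add_mset_commute[of B] AB
          intro!: gwf.LRSImp)
  next
    case (RSImp A' B' \<Gamma> \<Delta>)
    then show ?case
      by (auto simp: add_eq_conv_ex add_mset_commute[of B] AB intro!: gwf.RSImp)
  qed
  then show ?thesis
    using assms by blast
qed

lemma gwf_imp_g3m_boxtr: "gwf \<Gamma> \<Delta> \<Longrightarrow> g3m (image_mset boxtr \<Gamma>) (image_mset boxtr \<Delta>)"
proof (induction rule: gwf.induct)
  case (LRSImp A B C D \<Gamma> \<Delta>)
  then have "g3m {#MImpl (boxtr C) (boxtr D)#} {#MImpl (boxtr A) (boxtr B)#}"
    by (intro g3m.RImp) (simp add: add_mset_commute)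
  then show ?case
    by (simp add: g3m.LRM)
next
  case (RSImp A B \<Gamma> \<Delta>)
  then have "g3m {#} {#MImpl (boxtr A) (boxtr B)#}"
    by (intro g3m.RImp) simp
  then show ?case
    by (simp add: g3m.RN)
qed (auto intro: g3m.intros)

lemma add_mset_eq_image_mset_iff:
  "add_mset b M = image_mset f N \<longleftrightarrow> (\<exists>x N'. N = add_mset x N' \<and> f x = b \<and> M = image_mset f N')"
  by (metis image_mset_add_mset msed_map_invR)

lemma boxtr_eq_iff:
  "boxtr X = MAt p \<longleftrightarrow> X = At p"
  "boxtr X = MBot \<longleftrightarrow> X = Bot"
  "boxtr X = MConj a b \<longleftrightarrow> (\<exists>Y Z. X = Conj Y Z \<and> boxtr Y = a \<and> boxtr Z = b)"
  "boxtr X = MDisj a b \<longleftrightarrow> (\<exists>Y Z. X = Disj Y Z \<and> boxtr Y = a \<and> boxtr Z = b)"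
  "boxtr X = MImpl a b \<longleftrightarrow> (\<exists>Y Z. X = MImp Y Z \<and> boxtr Y = a \<and> boxtr Z = b)"
  "boxtr X = Box c \<longleftrightarrow> (\<exists>Y Z. X = SImp Y Z \<and> c = MImpl (boxtr Y) (boxtr Z))"
  by (cases X; auto)+

lemma g3m_boxtr_imp_gwf:
  "g3m G D \<Longrightarrow> G = image_mset boxtr \<Gamma> \<Longrightarrow> D = image_mset boxtr \<Delta> \<Longrightarrow> wfms \<Gamma> \<Longrightarrow> wfms \<Delta>
    \<Longrightarrow> gwf \<Gamma> \<Delta>"
proof (induction arbitrary: \<Gamma> \<Delta> rule: g3m.induct)
  case (idA p G D)
  then show ?case
    by (auto simp: add_mset_eq_image_mset_iff boxtr_eq_iff intro!: gwf.idA)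
next
  case (LBot G D)
  then show ?case
    by (auto simp: add_mset_eq_image_mset_iff boxtr_eq_iff intro!: gwf.LBot)
next
  case (LConj a b G D)
  then obtain X Y N where "\<Gamma> = add_mset (Conj X Y) N" "a = boxtr X" "b = boxtr Y"
    "G = image_mset boxtr N"
    by (auto simp: add_mset_eq_image_mset_iff boxtr_eq_iff)
  with LConj show ?case
    using LConj.IH[of "add_mset X (add_mset Y N)" \<Delta>] by (auto intro!: gwf.LConj)
next
  case (RConj G a D b)
  then obtain X Y N where "\<Delta> = add_mset (Conj X Y) N" "a = boxtr X" "b = boxtr Y"
    "D = image_mset boxtr N"
    by (auto simp: add_mset_eq_image_mset_iff boxtr_eq_iff)
  with RConj show ?case
    using RConj.IH(1)[of \<Gamma> "add_mset X N"] RConj.IH(2)[of \<Gamma> "add_mset Y N"]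
    by (auto intro!: gwf.RConj)
next
  case (LDisj a G D b)
  then obtain X Y N where "\<Gamma> = add_mset (Disj X Y) N" "a = boxtr X" "b = boxtr Y"
    "G = image_mset boxtr N"
    by (auto simp: add_mset_eq_image_mset_iff boxtr_eq_iff)
  with LDisj show ?case
    using LDisj.IH(1)[of "add_mset X N" \<Delta>] LDisj.IH(2)[of "add_mset Y N" \<Delta>]
    by (auto intro!: gwf.LDisj)
next
  case (RDisj G a b D)
  then obtain X Y N where "\<Delta> = add_mset (Disj X Y) N" "a = boxtr X" "b = boxtr Y"
    "D = image_mset boxtr N"
    by (auto simp: add_mset_eq_image_mset_iff boxtr_eq_iff)
  with RDisj show ?case
    using RDisj.IH[of \<Gamma> "add_mset X (add_mset Y N)"] by (auto intro!: gwf.RDisj)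
next
  case (LImp G a D b)
  then obtain X Y N where "\<Gamma> = add_mset (MImp X Y) N" "a = boxtr X" "b = boxtr Y"
    "G = image_mset boxtr N"
    by (auto simp: add_mset_eq_image_mset_iff boxtr_eq_iff)
  with LImp show ?case
    using LImp.IH(1)[of N "add_mset X \<Delta>"] LImp.IH(2)[of "add_mset Y N" \<Delta>]
    by (auto simp: isFrm_imp_isFrm2 intro!: gwf.LMImp)
next
  case (RImp a G b D)
  then obtain X Y N where "\<Delta> = add_mset (MImp X Y) N" "a = boxtr X" "b = boxtr Y"
    "D = image_mset boxtr N"
    by (auto simp: add_mset_eq_image_mset_iff boxtr_eq_iff)
  with RImp show ?case
    using RImp.IH[of "add_mset X \<Gamma>" "add_mset Y N"]
    by (auto simp: isFrm_imp_isFrm2 intro!: gwf.RMImp)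
next
  case (LRM a b G D)
  then obtain C E N A B K where
    \<Gamma>: "\<Gamma> = add_mset (SImp C E) N" "a = MImpl (boxtr C) (boxtr E)" and
    \<Delta>: "\<Delta> = add_mset (SImp A B) K" "b = MImpl (boxtr A) (boxtr B)"
    by (auto simp: add_mset_eq_image_mset_iff boxtr_eq_iff)
  with LRM have "gwf {#MImp C E#} {#MImp A B#}"
    by (intro LRM.IH) auto
  then have "gwf {#MImp C E, A#} {#B#}"
    by (auto dest: gwf_RMImp_inv simp: add_mset_commute)
  with LRM \<Gamma> \<Delta> show ?case
    by (auto intro!: gwf.LRSImp)
next
  case (RN b G D)
  then obtain A B K where
    \<Delta>: "\<Delta> = add_mset (SImp A B) K" "b = MImpl (boxtr A) (boxtr B)"
    by (auto simp: add_mset_eq_image_mset_iff boxtr_eq_iff)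
  with RN have "gwf {#} {#MImp A B#}"
    by (intro RN.IH) auto
  then have "gwf {#A#} {#B#}"
    by (auto dest: gwf_RMImp_inv)
  with RN \<Delta> show ?case
    by (auto intro!: gwf.RSImp)
qed

theorem theorem4p1:
  fixes \<Gamma> \<Delta> :: "fml multiset"
  assumes "\<forall>X\<in>#\<Gamma>. isFrm2 X" and "\<forall>X\<in>#\<Delta>. isFrm2 X"
  shows "gwf \<Gamma> \<Delta> \<longleftrightarrow> g3m (image_mset boxtr \<Gamma>) (image_mset boxtr \<Delta>)"
proof -
  have "wfms \<Gamma>" "wfms \<Delta>"
    using assms by (simp_all add: wfms_def)
  then show ?thesis
    using gwf_imp_g3m_boxtr g3m_boxtr_imp_gwf by blast
qed

end
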